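(* Let $L\le R$ be finite and let $C=A_N+W$ be a corner-modified BBT matrix on $\mathcal V_{L,R}$, with $A_N=\mathbf P_{L,R}\mathbf A|_{\mathcal V_{L,R}}$ of bandwidth $(p,q)$ and $W$ a corner modification for bandwidth $(p,q)$. Let $\kappa\in\mathbb N$ with $2(R-L)>\kappa(q-p)$. Then $C^\kappa=A_N^{(\kappa)}+W_\kappa$, where $A_N^{(\kappa)}=\mathbf P_{L,R}\mathbf A^\kappa|_{\mathcal V_{L,R}}$ and $W_\kappa$ is a corner modification for bandwidth $(\kappa p,\kappa q)$.
   Context: Fix $d\ge1$. $\mathcal V^S_d$: doubly infinite sequences $\{\psi_j\}_{j\in\mathbb Z}$, $\psi_j\in\mathbb C^d$. A matrix Laurent polynomial of bandwidth $(p,q)$ is $\sum_{r=p}^qa_rw^r$, integers $p\le q$, $a_r$ complex $d\times d$, $a_p\ne0\ne a_q$; its BBL transformation is $(\mathbf A\Psi)_j=\sum_ra_r\psi_{j+r}$. $\mathcal V_{L,R}$ = sequences with $\psi_j=0$ for $j\notin[L,R]$; $\mathbf P_{L,R}$ zeroes entries outside $[L,R]$. For integers $p\le q$, the bulk projector for bandwidth $(p,q)$ on $\mathcal V_{L,R}$ is $P_B=\mathbf P_{L-\min(p,0),R-\max(0,q)}|_{\mathcal V_{L,R}}$; a corner modification for bandwidth $(p,q)$ is any linear map $W$ on $\mathcal V_{L,R}$ with $P_BW=0$; a corner-modified BBT matrix is $A_N+W$ with $A_N=\mathbf P_{L,R}\mathbf A|_{\mathcal V_{L,R}}$. *)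

theory Defs
  imports "HOL-Analysis.Analysis"
begin

text \<open>Sequences in V^S_d: doubly infinite sequences of vectors in C^d; d is the
  cardinality of the finite index type 'd.\<close>
type_synonym 'd seqv = "int \<Rightarrow> complex ^ 'd"

text \<open>A matrix Laurent polynomial is given by its coefficient function
  a :: int => d x d matrix; bandwidth (p,q).\<close>
definition bandwidth :: "(int \<Rightarrow> complex ^ ('d::finite) ^ 'd) \<Rightarrow> int \<Rightarrow> int \<Rightarrow> bool" where
  "bandwidth a p q \<longleftrightarrow> p \<le> q \<and> a p \<noteq> 0 \<and> a q \<noteq> 0 \<and> (\<forall>r. (r < p \<or> q < r) \<longrightarrow> a r = 0)"

definition bbl :: "(int \<Rightarrow> complex ^ ('d::finite) ^ 'd) \<Rightarrow> ('d::finite) seqv \<Rightarrow> ('d::finite) seqv" where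
  "bbl a \<psi> = (\<lambda>j. \<Sum>r\<in>{r. a r \<noteq> 0}. a r *v \<psi> (j + r))"

definition VLR :: "int \<Rightarrow> int \<Rightarrow> ('d::finite) seqv set" where
  "VLR L R = {\<psi>. \<forall>j. (j < L \<or> R < j) \<longrightarrow> \<psi> j = 0}"

definition PLR :: "int \<Rightarrow> int \<Rightarrow> ('d::finite) seqv \<Rightarrow> ('d::finite) seqv" where
  "PLR L R \<psi> = (\<lambda>j. if L \<le> j \<and> j \<le> R then \<psi> j else 0)"

definition linear_on_VLR :: "int \<Rightarrow> int \<Rightarrow> (('d::finite) seqv \<Rightarrow> ('d::finite) seqv) \<Rightarrow> bool" where
  "linear_on_VLR L R W \<longleftrightarrow>
     (\<forall>\<psi>\<in>VLR L R. W \<psi> \<in> VLR L R) \<and>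
     (\<forall>\<psi>\<in>VLR L R. \<forall>\<phi>\<in>VLR L R. W (\<lambda>j. \<psi> j + \<phi> j) = (\<lambda>j. W \<psi> j + W \<phi> j)) \<and>
     (\<forall>\<psi>\<in>VLR L R. \<forall>c::complex. W (\<lambda>j. c *s \<psi> j) = (\<lambda>j. c *s W \<psi> j))"

definition bulk_proj :: "int \<Rightarrow> int \<Rightarrow> int \<Rightarrow> int \<Rightarrow> ('d::finite) seqv \<Rightarrow> ('d::finite) seqv" where
  "bulk_proj L R p q = PLR (L - min p 0) (R - max 0 q)"

definition corner_mod :: "int \<Rightarrow> int \<Rightarrow> int \<Rightarrow> int \<Rightarrow> (('d::finite) seqv \<Rightarrow> ('d::finite) seqv) \<Rightarrow> bool" where
  "corner_mod L R p q W \<longleftrightarrow> linear_on_VLR L R W \<and>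
     (\<forall>\<psi>\<in>VLR L R. bulk_proj L R p q (W \<psi>) = (\<lambda>j. 0))"

definition trunc :: "int \<Rightarrow> int \<Rightarrow> (('d::finite) seqv \<Rightarrow> ('d::finite) seqv) \<Rightarrow> ('d::finite) seqv \<Rightarrow> ('d::finite) seqv" where
  "trunc L R T \<psi> = PLR L R (T \<psi>)"

end

theory Submission
  imports Defs
begin

text \<open>Since the BBL transformation of bandwidth (p,q) only looks at the window [j+p, j+q],
  the corner-modified matrix C agrees with A on the (p,q)-bulk, and by induction C^k agrees
  with A^k on the (kp,kq)-bulk, which is what remains after shrinking the bulk k times.
  Hence W_k := C^k - P_{L,R} A^k is a linear map vanishing on that bulk. The hypotheses
  L \<le> R and 2(R - L) > k(q - p) only make that bulk nonempty; the argument does not use them.\<close>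

definition in_bulk :: "int \<Rightarrow> int \<Rightarrow> int \<Rightarrow> int \<Rightarrow> int \<Rightarrow> bool" where
  "in_bulk L R p q j \<longleftrightarrow> L - min p 0 \<le> j \<and> j \<le> R - max 0 q"

definition corner_modified_bbt ::
    "(int \<Rightarrow> complex ^ ('d::finite) ^ 'd) \<Rightarrow> ('d seqv \<Rightarrow> 'd seqv) \<Rightarrow> int \<Rightarrow> int \<Rightarrow> 'd seqv \<Rightarrow> 'd seqv" where
  "corner_modified_bbt a W L R = (\<lambda>\<phi> j. trunc L R (bbl a) \<phi> j + W \<phi> j)"

lemma bbl_add: "bbl a (\<lambda>j. \<psi> j + \<phi> j) = (\<lambda>j. bbl a \<psi> j + bbl a \<phi> j)"
  unfolding bbl_def by (simp add: matrix_vector_right_distrib sum.distrib)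

lemma scalar_mult_sum: "(c::complex) *s sum f S = sum (\<lambda>x. c *s f x) S"
  by (simp add: vec_eq_iff sum_component sum_distrib_left)

lemma bbl_scale: "bbl a (\<lambda>j. c *s \<psi> j) = (\<lambda>j. c *s bbl a \<psi> j)"
  unfolding bbl_def by (simp add: vec.scale scalar_mult_sum)

lemma bbl_pow_add: "(bbl a ^^ k) (\<lambda>j. \<psi> j + \<phi> j) = (\<lambda>j. (bbl a ^^ k) \<psi> j + (bbl a ^^ k) \<phi> j)"
  by (induction k) (simp_all add: bbl_add)

lemma bbl_pow_scale: "(bbl a ^^ k) (\<lambda>j. c *s \<psi> j) = (\<lambda>j. c *s (bbl a ^^ k) \<psi> j)"
  by (induction k) (simp_all add: bbl_scale)

lemma linear_on_VLR_trunc_bbl_pow: "linear_on_VLR L R (trunc L R (bbl a ^^ k))"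
  unfolding linear_on_VLR_def trunc_def
  by (auto simp: bbl_pow_add bbl_pow_scale PLR_def VLR_def fun_eq_iff)

lemma linear_on_VLR_add:
  assumes "linear_on_VLR L R F" "linear_on_VLR L R G"
  shows "linear_on_VLR L R (\<lambda>\<psi> j. F \<psi> j + G \<psi> j)"
  using assms unfolding linear_on_VLR_def VLR_def
  by (auto simp: algebra_simps vector_add_ldistrib)

lemma linear_on_VLR_diff:
  assumes "linear_on_VLR L R F" "linear_on_VLR L R G"
  shows "linear_on_VLR L R (\<lambda>\<psi> j. F \<psi> j - G \<psi> j)"
  using assms unfolding linear_on_VLR_def VLR_def
  by (auto simp: algebra_simps vector_ssub_ldistrib)

lemma linear_on_VLR_funpow:
  assumes "linear_on_VLR L R F"
  shows "linear_on_VLR L R (F ^^ k)"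
proof (induction k)
  case 0
  show ?case by (simp add: linear_on_VLR_def)
next
  case (Suc k)
  with assms show ?case
    unfolding linear_on_VLR_def by (simp add: VLR_def)
qed

lemma linear_on_VLR_corner_modified_bbt:
  "linear_on_VLR L R W \<Longrightarrow> linear_on_VLR L R (corner_modified_bbt a W L R)"
  using linear_on_VLR_add linear_on_VLR_trunc_bbl_pow[where k = 1]
  unfolding corner_modified_bbt_def by fastforce

lemma bulk_proj_apply: "bulk_proj L R p q \<phi> j = (if in_bulk L R p q j then \<phi> j else 0)"
  unfolding bulk_proj_def PLR_def in_bulk_def by simp

lemma in_bulk_imp_bounds: "in_bulk L R p q j \<Longrightarrow> L \<le> j \<and> j \<le> R"
  unfolding in_bulk_def by linarith

lemma in_bulk_mult_iff:
  "in_bulk L R (int k * p) (int k * q) j \<longleftrightarrow> L - int k * min p 0 \<le> j \<and> j \<le> R - int k * max 0 q"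
proof -
  have "min (int k * p) 0 = int k * min p 0" "max 0 (int k * q) = int k * max 0 q"
    by (auto simp: min_def max_def mult_le_0_iff zero_le_mult_iff mult_left_mono)
  then show ?thesis unfolding in_bulk_def by simp
qed

lemma in_bulk_Suc_window:
  assumes "in_bulk L R (int (Suc k) * p) (int (Suc k) * q) j" "p \<le> r" "r \<le> q"
  shows "in_bulk L R (int k * p) (int k * q) (j + r)"
proof -
  have "min p 0 \<le> r" "r \<le> max 0 q" using assms(2,3) by linarith+
  with assms(1) show ?thesis
    unfolding in_bulk_mult_iff by (simp add: algebra_simps)
qed

lemma in_bulk_Suc_base:
  "in_bulk L R (int (Suc k) * p) (int (Suc k) * q) j \<Longrightarrow> in_bulk L R p q j"
  using in_bulk_mult_iff[of L R "Suc k" p q j] in_bulk_mult_iff[of L R 1 p q j]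
  by (simp add: algebra_simps) (smt (verit) mult_nonneg_nonpos of_nat_0_le_iff zero_le_mult_iff)

lemma bandwidth_support: "bandwidth a p q \<Longrightarrow> a r \<noteq> 0 \<Longrightarrow> p \<le> r \<and> r \<le> q"
  unfolding bandwidth_def by force

lemma bbl_cong_window:
  assumes "bandwidth a p q" "\<And>r. p \<le> r \<Longrightarrow> r \<le> q \<Longrightarrow> \<phi> (j + r) = \<psi> (j + r)"
  shows "bbl a \<phi> j = bbl a \<psi> j"
  unfolding bbl_def using assms bandwidth_support[OF assms(1)] by (intro sum.cong) auto

lemma corner_mod_vanishes_on_bulk:
  "corner_mod L R p q W \<Longrightarrow> \<phi> \<in> VLR L R \<Longrightarrow> in_bulk L R p q j \<Longrightarrow> W \<phi> j = 0"
  unfolding corner_mod_def by (metis bulk_proj_apply)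

lemma corner_modified_bbt_on_bulk:
  assumes "corner_mod L R p q W" "\<phi> \<in> VLR L R" "in_bulk L R p q j"
  shows "corner_modified_bbt a W L R \<phi> j = bbl a \<phi> j"
  using corner_mod_vanishes_on_bulk[OF assms] in_bulk_imp_bounds[OF assms(3)]
  by (simp add: corner_modified_bbt_def trunc_def PLR_def)

lemma funpow_agrees_with_bbl_pow_on_bulk:
  assumes bw: "bandwidth a p q"
    and maps: "\<And>\<phi>. \<phi> \<in> VLR L R \<Longrightarrow> F \<phi> \<in> VLR L R"
    and agree: "\<And>\<phi> j. \<phi> \<in> VLR L R \<Longrightarrow> in_bulk L R p q j \<Longrightarrow> F \<phi> j = bbl a \<phi> j"
    and \<psi>: "\<psi> \<in> VLR L R"
  shows "in_bulk L R (int k * p) (int k * q) j \<Longrightarrow> (F ^^ k) \<psi> j = (bbl a ^^ k) \<psi> j"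
proof (induction k arbitrary: j)
  case 0
  then show ?case by simp
next
  case (Suc k)
  have "(F ^^ k) \<psi> \<in> VLR L R"
    using \<psi> maps by (induction k) auto
  with Suc.prems have "(F ^^ Suc k) \<psi> j = bbl a ((F ^^ k) \<psi>) j"
    using agree in_bulk_Suc_base by simp
  also have "\<dots> = bbl a ((bbl a ^^ k) \<psi>) j"
    using bw Suc.IH in_bulk_Suc_window[OF Suc.prems] by (intro bbl_cong_window) auto
  finally show ?case by simp
qed

lemma corner_mod_pow_remainder:
  assumes bw: "bandwidth a p q" and cm: "corner_mod L R p q W"
  shows "corner_mod L R (int k * p) (int k * q)
           (\<lambda>\<psi> j. (corner_modified_bbt a W L R ^^ k) \<psi> j - trunc L R (bbl a ^^ k) \<psi> j)"
    (is "corner_mod L R _ _ ?Wk")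
proof -
  let ?C = "corner_modified_bbt a W L R"
  have lin_C: "linear_on_VLR L R ?C"
    using cm linear_on_VLR_corner_modified_bbt unfolding corner_mod_def by blast
  have "?Wk \<psi> j = 0" if \<psi>: "\<psi> \<in> VLR L R" and j: "in_bulk L R (int k * p) (int k * q) j" for \<psi> j
  proof -
    have "(?C ^^ k) \<psi> j = (bbl a ^^ k) \<psi> j"
      using lin_C corner_modified_bbt_on_bulk[OF cm] \<psi> j unfolding linear_on_VLR_def
      by (intro funpow_agrees_with_bbl_pow_on_bulk[OF bw]) auto
    moreover have "L \<le> j \<and> j \<le> R"
      using j in_bulk_imp_bounds by blast
    ultimately show ?thesis by (simp add: trunc_def PLR_def)
  qed
  moreover have "linear_on_VLR L R ?Wk"
    by (intro linear_on_VLR_diff linear_on_VLR_funpow lin_C linear_on_VLR_trunc_bbl_pow)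
  ultimately show ?thesis
    unfolding corner_mod_def by (auto simp: bulk_proj_apply fun_eq_iff)
qed

theorem mainTheorem15:
  fixes a :: "int \<Rightarrow> complex ^ ('d::finite) ^ 'd"
    and W :: "('d::finite) seqv \<Rightarrow> ('d::finite) seqv"
    and L R p q :: int and \<kappa> :: nat
  assumes "L \<le> R"
    and "bandwidth a p q"
    and "corner_mod L R p q W"
    and "2 * (R - L) > int \<kappa> * (q - p)"
  shows "\<exists>W\<kappa>. corner_mod L R (int \<kappa> * p) (int \<kappa> * q) W\<kappa> \<and>
           (\<forall>\<psi>\<in>VLR L R.
              ((\<lambda>\<phi> j. trunc L R (bbl a) \<phi> j + W \<phi> j) ^^ \<kappa>) \<psi>
              = (\<lambda>j. trunc L R (bbl a ^^ \<kappa>) \<psi> j + W\<kappa> \<psi> j))"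
proof -
  let ?C = "corner_modified_bbt a W L R"
  have "corner_mod L R (int \<kappa> * p) (int \<kappa> * q)
          (\<lambda>\<psi> j. (?C ^^ \<kappa>) \<psi> j - trunc L R (bbl a ^^ \<kappa>) \<psi> j)"
    using corner_mod_pow_remainder[OF assms(2,3)] .
  then show ?thesis
    unfolding corner_modified_bbt_def by fastforce
qed

end
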